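(* If $n\ge3$, then $\ker(\theta)\le FVP_n\cap FH_n$.
   Context: $FVB_n$ is the flat virtual braid group: generators $\sigma_1,\dots,\sigma_{n-1},\rho_1,\dots,\rho_{n-1}$, relations $\sigma_i\sigma_j=\sigma_j\sigma_i$, $\rho_i\rho_j=\rho_j\rho_i$, $\sigma_i\rho_j=\rho_j\sigma_i$ for $|i-j|\ge2$; $\sigma_i\sigma_{i+1}\sigma_i=\sigma_{i+1}\sigma_i\sigma_{i+1}$; $\rho_i\rho_{i+1}\rho_i=\rho_{i+1}\rho_i\rho_{i+1}$; $\rho_i\rho_{i+1}\sigma_i=\sigma_{i+1}\rho_i\rho_{i+1}$; $\rho_i^2=\sigma_i^2=1$. Let $\iota_1:FVB_n\to S_n$ send both $\sigma_i$ and $\rho_i$ to the transposition $(i,i+1)$, and $\iota_2:FVB_n\to S_n$ send $\sigma_i$ to $1$ and $\rho_i$ to $(i,i+1)$; $FVP_n=\ker\iota_1$ and $FH_n=\ker\iota_2$. $F_{2n}$ is free on $x_1,\dots,x_n,y_1,\dots,y_n$ and $\theta:FVB_n\to{\rm Aut}(F_{2n})$ is the homomorphism with $\theta(\sigma_i):x_i\mapsto x_{i+1}y_{i+1},\ x_{i+1}\mapsto x_iy_{i+1}^{-1}$ and $\theta(\rho_i):x_i\leftrightarrow x_{i+1},\ y_i\leftrightarrow y_{i+1}$, other generators fixed; automorphisms compose on the right, $(fg)(x)=g(f(x))$. *)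

theory Defs
  imports Main "HOL-Combinatorics.Transposition"
begin

text \<open>Generators sigma_i (FSig i) and rho_i (FRho i), 1 <= i <= n-1.
  Since all generators are involutions, every element of FVB_n is represented
  by a positive word in the generators.\<close>

datatype fvb_gen = FSig nat | FRho nat

fun gen_index :: "fvb_gen \<Rightarrow> nat" where
  "gen_index (FSig i) = i"
| "gen_index (FRho i) = i"

definition fvb_word :: "nat \<Rightarrow> fvb_gen list \<Rightarrow> bool" where
  "fvb_word n w \<longleftrightarrow> (\<forall>s\<in>set w. 1 \<le> gen_index s \<and> gen_index s \<le> n - 1)"

inductive fvb_rel :: "nat \<Rightarrow> fvb_gen list \<Rightarrow> fvb_gen list \<Rightarrow> bool" for n where
  comm_ss: "\<lbrakk>1 \<le> i; i \<le> n - 1; 1 \<le> j; j \<le> n - 1; i + 2 \<le> j \<or> j + 2 \<le> i\<rbrakk>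
     \<Longrightarrow> fvb_rel n [FSig i, FSig j] [FSig j, FSig i]"
| comm_rr: "\<lbrakk>1 \<le> i; i \<le> n - 1; 1 \<le> j; j \<le> n - 1; i + 2 \<le> j \<or> j + 2 \<le> i\<rbrakk>
     \<Longrightarrow> fvb_rel n [FRho i, FRho j] [FRho j, FRho i]"
| comm_sr: "\<lbrakk>1 \<le> i; i \<le> n - 1; 1 \<le> j; j \<le> n - 1; i + 2 \<le> j \<or> j + 2 \<le> i\<rbrakk>
     \<Longrightarrow> fvb_rel n [FSig i, FRho j] [FRho j, FSig i]"
| braid_s: "\<lbrakk>1 \<le> i; i + 1 \<le> n - 1\<rbrakk>
     \<Longrightarrow> fvb_rel n [FSig i, FSig (i+1), FSig i] [FSig (i+1), FSig i, FSig (i+1)]"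
| braid_r: "\<lbrakk>1 \<le> i; i + 1 \<le> n - 1\<rbrakk>
     \<Longrightarrow> fvb_rel n [FRho i, FRho (i+1), FRho i] [FRho (i+1), FRho i, FRho (i+1)]"
| mixed: "\<lbrakk>1 \<le> i; i + 1 \<le> n - 1\<rbrakk>
     \<Longrightarrow> fvb_rel n [FRho i, FRho (i+1), FSig i] [FSig (i+1), FRho i, FRho (i+1)]"
| inv_r: "\<lbrakk>1 \<le> i; i \<le> n - 1\<rbrakk> \<Longrightarrow> fvb_rel n [FRho i, FRho i] []"
| inv_s: "\<lbrakk>1 \<le> i; i \<le> n - 1\<rbrakk> \<Longrightarrow> fvb_rel n [FSig i, FSig i] []"

inductive fvb_eq :: "nat \<Rightarrow> fvb_gen list \<Rightarrow> fvb_gen list \<Rightarrow> bool" for n where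
  refl: "fvb_word n w \<Longrightarrow> fvb_eq n w w"
| rel: "\<lbrakk>fvb_word n u; fvb_word n v; fvb_rel n l r\<rbrakk> \<Longrightarrow> fvb_eq n (u @ l @ v) (u @ r @ v)"
| sym: "fvb_eq n w v \<Longrightarrow> fvb_eq n v w"
| trans: "\<lbrakk>fvb_eq n u v; fvb_eq n v w\<rbrakk> \<Longrightarrow> fvb_eq n u w"

definition fvb_class :: "nat \<Rightarrow> fvb_gen list \<Rightarrow> fvb_gen list set" where
  "fvb_class n w = {v. fvb_eq n w v}"

definition FVB :: "nat \<Rightarrow> fvb_gen list set set" where
  "FVB n = {fvb_class n w | w. fvb_word n w}"

fun iota1_gen :: "fvb_gen \<Rightarrow> nat \<Rightarrow> nat" where
  "iota1_gen (FSig i) = transpose i (i+1)"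
| "iota1_gen (FRho i) = transpose i (i+1)"

fun iota2_gen :: "fvb_gen \<Rightarrow> nat \<Rightarrow> nat" where
  "iota2_gen (FSig i) = id"
| "iota2_gen (FRho i) = transpose i (i+1)"

definition iota1 :: "fvb_gen list \<Rightarrow> nat \<Rightarrow> nat" where
  "iota1 w = foldr (\<lambda>s f. iota1_gen s \<circ> f) w id"

definition iota2 :: "fvb_gen list \<Rightarrow> nat \<Rightarrow> nat" where
  "iota2 w = foldr (\<lambda>s f. iota2_gen s \<circ> f) w id"

definition FVP :: "nat \<Rightarrow> fvb_gen list set set" where
  "FVP n = {c \<in> FVB n. \<exists>w\<in>c. iota1 w = id}"

definition FH :: "nat \<Rightarrow> fvb_gen list set set" where
  "FH n = {c \<in> FVB n. \<exists>w\<in>c. iota2 w = id}"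

datatype fletter = FX nat | FY nat

text \<open>Free group words: (a, True) is the letter a, (a, False) is a^{-1}.\<close>
type_synonym fword = "(fletter \<times> bool) list"

fun letter_index :: "fletter \<Rightarrow> nat" where
  "letter_index (FX i) = i"
| "letter_index (FY i) = i"

definition fword_on :: "nat \<Rightarrow> fword \<Rightarrow> bool" where
  "fword_on n u \<longleftrightarrow> (\<forall>(a,b)\<in>set u. 1 \<le> letter_index a \<and> letter_index a \<le> n)"

definition finv :: "fword \<Rightarrow> fword" where
  "finv u = rev (map (\<lambda>(a,b). (a, \<not> b)) u)"

definition cancel1 :: "fletter \<times> bool \<Rightarrow> fword \<Rightarrow> fword" where
  "cancel1 x ys = (case ys of [] \<Rightarrow> [x]
      | y # ys' \<Rightarrow> (if fst y = fst x \<and> snd y = (\<not> snd x) then ys' else x # ys))"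

definition freduce :: "fword \<Rightarrow> fword" where
  "freduce u = foldr cancel1 u []"

definition fsubst :: "(fletter \<Rightarrow> fword) \<Rightarrow> fword \<Rightarrow> fword" where
  "fsubst f u = concat (map (\<lambda>(a,b). if b then f a else finv (f a)) u)"

fun theta_gen :: "fvb_gen \<Rightarrow> fletter \<Rightarrow> fword" where
  "theta_gen (FSig i) (FX j) =
     (if j = i then [(FX (i+1), True), (FY (i+1), True)]
      else if j = i + 1 then [(FX i, True), (FY (i+1), False)]
      else [(FX j, True)])"
| "theta_gen (FSig i) (FY j) = [(FY j, True)]"
| "theta_gen (FRho i) (FX j) = [(FX (transpose i (i+1) j), True)]"
| "theta_gen (FRho i) (FY j) = [(FY (transpose i (i+1) j), True)]"

text \<open>theta of a word s_1 ... s_k, with right composition: (fg)(x) = g(f(x)),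
  so s_1 acts first.\<close>
definition theta_act :: "fvb_gen list \<Rightarrow> fword \<Rightarrow> fword" where
  "theta_act w u = fold (\<lambda>s v. fsubst (theta_gen s) v) w u"

definition ker_theta :: "nat \<Rightarrow> fvb_gen list set set" where
  "ker_theta n = {c \<in> FVB n. \<exists>w\<in>c. \<forall>u. fword_on n u \<longrightarrow>
       freduce (theta_act w u) = freduce u}"

end

theory Submission
  imports Defs
begin

text \<open>Under \<open>\<theta>(w)\<close> every \<open>y\<^sub>j\<close> is sent to a single generator \<open>y\<^sub>k\<close>, and every \<open>x\<^sub>j\<close> to a
  word \<open>x\<^sub>k v\<close> with \<open>v\<close> a word in the \<open>y\<close>'s; in both cases \<open>k\<close> is the image of \<open>j\<close>
  under the inverse of \<open>\<iota>\<^sub>1(w)\<close>, resp. \<open>\<iota>\<^sub>2(w)\<close>. So if \<open>\<theta>(w)\<close> is the identity,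
  both permutations fix every index and \<open>w\<close> lies in \<open>FVP\<^sub>n \<inter> FH\<^sub>n\<close>.
  The argument works for every \<open>n\<close>.\<close>

lemma fvb_rel_words: "fvb_rel n l r \<Longrightarrow> fvb_word n l \<and> fvb_word n r"
  by (induction rule: fvb_rel.induct) (auto simp: fvb_word_def)

lemma fvb_eq_words: "fvb_eq n u v \<Longrightarrow> fvb_word n u \<and> fvb_word n v"
  by (induction rule: fvb_eq.induct) (auto simp: fvb_word_def dest!: fvb_rel_words)

lemma fvb_word_if_mem_FVB: "c \<in> FVB n \<Longrightarrow> w \<in> c \<Longrightarrow> fvb_word n w"
  by (auto simp: FVB_def fvb_class_def dest: fvb_eq_words)

lemma foldr_comp_rev_involutions:
  assumes "\<And>s. g s \<circ> g s = id"
  shows "foldr (\<lambda>s f. g s \<circ> f) (rev w) id \<circ> foldr (\<lambda>s f. g s \<circ> f) w id = id"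
proof (induction w)
  case Nil
  show ?case by simp
next
  case (Cons s w)
  have "foldr (\<lambda>s f. g s \<circ> f) (rev w @ [s]) id = foldr (\<lambda>s f. g s \<circ> f) (rev w) id \<circ> g s"
    by (induction w rule: rev_induct) auto
  then have "foldr (\<lambda>s f. g s \<circ> f) (rev (s # w)) id \<circ> foldr (\<lambda>s f. g s \<circ> f) (s # w) id
      = foldr (\<lambda>s f. g s \<circ> f) (rev w) id \<circ> (g s \<circ> g s) \<circ> foldr (\<lambda>s f. g s \<circ> f) w id"
    by (simp add: comp_assoc)
  also have "\<dots> = id"
    by (simp only: assms comp_id Cons.IH)
  finally show ?case .
qed

lemma foldr_comp_fixpoint:
  "(\<And>s. s \<in> set w \<Longrightarrow> g s j = j) \<Longrightarrow> foldr (\<lambda>s f. g s \<circ> f) w id j = j"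
  by (induction w) auto

lemma iota1_rev_inverse: "iota1 (rev w) \<circ> iota1 w = id"
  unfolding iota1_def
  by (rule foldr_comp_rev_involutions) (case_tac s; simp add: fun_eq_iff)

lemma iota2_rev_inverse: "iota2 (rev w) \<circ> iota2 w = id"
  unfolding iota2_def
  by (rule foldr_comp_rev_involutions) (case_tac s; simp add: fun_eq_iff)

lemma iota_fixes_outside:
  assumes "fvb_word n w" "j \<notin> {1..n}"
  shows "iota1 w j = j" "iota2 w j = j"
proof -
  have "iota1_gen s j = j \<and> iota2_gen s j = j" if "s \<in> set w" for s
    using assms that by (cases s) (auto simp: fvb_word_def transpose_def)
  then show "iota1 w j = j" "iota2 w j = j"
    unfolding iota1_def iota2_def by (auto intro: foldr_comp_fixpoint)
qed

lemma iota1_Cons: "iota1 (s # w) = iota1_gen s \<circ> iota1 w"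
  by (simp add: iota1_def)

lemma iota2_Cons: "iota2 (s # w) = iota2_gen s \<circ> iota2 w"
  by (simp add: iota2_def)

lemma theta_act_snoc: "theta_act (w @ [s]) u = fsubst (theta_gen s) (theta_act w u)"
  by (simp add: theta_act_def)

lemma fsubst_Cons: "fsubst f (x # u) = fsubst f [x] @ fsubst f u"
  by (simp add: fsubst_def)

definition y_word :: "fword \<Rightarrow> bool" where
  "y_word u \<longleftrightarrow> fst ` set u \<subseteq> range FY"

lemma y_word_fsubst_theta_gen: "y_word u \<Longrightarrow> y_word (fsubst (theta_gen s) u)"
  by (cases s) (fastforce simp: y_word_def fsubst_def finv_def)+

lemma theta_act_FY: "theta_act w [(FY j, True)] = [(FY (iota2 (rev w) j), True)]"
proof (induction w rule: rev_induct)
  case Nil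
  show ?case by (simp add: theta_act_def iota2_def)
next
  case (snoc s w)
  then show ?case
    by (cases s) (simp_all add: theta_act_snoc iota2_Cons fsubst_def)
qed

lemma theta_act_FX:
  "\<exists>v. theta_act w [(FX j, True)] = (FX (iota1 (rev w) j), True) # v \<and> y_word v"
proof (induction w rule: rev_induct)
  case Nil
  show ?case by (simp add: theta_act_def iota1_def y_word_def)
next
  case (snoc s w)
  let ?k = "iota1 (rev w) j"
  obtain v where v: "theta_act w [(FX j, True)] = (FX ?k, True) # v" "y_word v"
    using snoc.IH by blast
  have "\<exists>v'. fsubst (theta_gen s) [(FX ?k, True)] = (FX (iota1_gen s ?k), True) # v' \<and> y_word v'"
  proof (cases s)
    case (FSig i)
    then show ?thesis
      by (cases "?k = i"; cases "?k = i + 1") (auto simp: fsubst_def y_word_def)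
  qed (simp add: fsubst_def y_word_def)
  then obtain v' where v': "fsubst (theta_gen s) [(FX ?k, True)] = (FX (iota1_gen s ?k), True) # v'"
    "y_word v'"
    by blast
  have "theta_act (w @ [s]) [(FX j, True)]
      = (FX (iota1 (rev (w @ [s])) j), True) # (v' @ fsubst (theta_gen s) v)"
    by (simp add: theta_act_snoc v(1) fsubst_Cons[of _ _ v] v'(1) iota1_Cons)
  moreover have "y_word (v' @ fsubst (theta_gen s) v)"
    using v'(2) y_word_fsubst_theta_gen[OF v(2), of s] by (simp add: y_word_def image_Un)
  ultimately show ?case by blast
qed

lemma set_freduce: "set (freduce u) \<subseteq> set u"
  by (induction u) (auto simp: freduce_def cancel1_def split: list.splits)

lemma freduce_Cons_fresh:
  assumes "fst x \<notin> fst ` set u"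
  shows "freduce (x # u) = x # freduce u"
proof -
  have "fst x \<notin> fst ` set (freduce u)"
    using assms set_freduce by blast
  then show ?thesis
    by (auto simp: freduce_def cancel1_def split: list.splits)
qed

lemma freduce_singleton: "freduce [x] = [x]"
  by (simp add: freduce_def cancel1_def)

lemma iota_rev_eq_id_if_theta_trivial:
  assumes w: "fvb_word n w"
    and trivial: "\<And>u. fword_on n u \<Longrightarrow> freduce (theta_act w u) = freduce u"
  shows "iota1 (rev w) = id" "iota2 (rev w) = id"
proof -
  have "iota1 (rev w) j = j \<and> iota2 (rev w) j = j" for j
  proof (cases "j \<in> {1..n}")
    case True
    then have on: "fword_on n [(FX j, True)]" "fword_on n [(FY j, True)]"
      by (auto simp: fword_on_def)
    obtain v where v: "theta_act w [(FX j, True)] = (FX (iota1 (rev w) j), True) # v" "y_word v"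
      using theta_act_FX by blast
    then have "FX (iota1 (rev w) j) \<notin> fst ` set v"
      by (auto simp: y_word_def)
    then have "(FX (iota1 (rev w) j), True) # freduce v = [(FX j, True)]"
      using trivial[OF on(1)] by (simp add: v(1) freduce_Cons_fresh freduce_singleton)
    moreover have "[(FY (iota2 (rev w) j), True)] = [(FY j, True)]"
      using trivial[OF on(2)] by (simp add: theta_act_FY freduce_singleton)
    ultimately show ?thesis by simp
  next
    case False
    moreover have "fvb_word n (rev w)"
      using w by (simp add: fvb_word_def)
    ultimately show ?thesis
      using iota_fixes_outside by blast
  qed
  then show "iota1 (rev w) = id" "iota2 (rev w) = id"
    by auto
qed

theorem proposition9:
  fixes n :: nat
  assumes "n \<ge> 3"
  shows "ker_theta n \<subseteq> FVP n \<inter> FH n"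
proof
  fix c
  assume "c \<in> ker_theta n"
  then obtain w where c: "c \<in> FVB n" "w \<in> c"
    and trivial: "\<And>u. fword_on n u \<Longrightarrow> freduce (theta_act w u) = freduce u"
    by (auto simp: ker_theta_def)
  have "iota1 (rev w) = id" "iota2 (rev w) = id"
    using iota_rev_eq_id_if_theta_trivial fvb_word_if_mem_FVB[OF c] trivial by blast+
  then have "iota1 w = id" "iota2 w = id"
    using iota1_rev_inverse[of w] iota2_rev_inverse[of w] by simp_all
  then show "c \<in> FVP n \<inter> FH n"
    using c by (auto simp: FVP_def FH_def)
qed

end
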